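(* Let $t$ be a positive integer and $\mathbf v$ a good vector with respect to $t$. The code $\mathcal C$ of Construction C built from $\mathbf v$ is an $(n,(t+1)n,2t+1,n)$-PIR array code over $\mathbb{F}_q$, where $n=4t+1$ if $\mathbf v$ has length $2t$ and $n=4t+2$ if $\mathbf v$ has length $2t+1$.
   Context: Fix a finite field $\mathbb{F}_q$. Good vector: for a positive integer $t$, a vector $\mathbf v=(v_1,\dots,v_{2t})\in[t]^{2t}$ or $\mathbf v\in\{0,\dots,t\}^{2t+1}$ is good w.r.t. $t$ if every $j\in[t]$ appears exactly twice in $\mathbf v$ and whenever $v_i=v_{i'}=j\in[t]$ with $i<i'$ then $i'-i=j$; for $j\in[t]$ let $j(\mathbf v)=\max\{i:v_i=j\}$. Construction C: let $n=4t+1$ if $|\mathbf v|=2t$ and $n=4t+2$ if $|\mathbf v|=2t+1$; all indices are taken modulo $n$ with representatives in $[n]$. For $\mathbf x=(x_1,\dots,x_n)\in\mathbb{F}_q^n$, $i\in[n]$, $j\in[t]$, put $y_{i,j}=x_{i-t-j(\mathbf v)}+x_{i-t-j(\mathbf v)+j}$, and define $\mathcal C(\mathbf x)=(\mathbf c_1,\dots,\mathbf c_n)$ with $\mathbf c_i=(x_i,y_{i,1},\dots,y_{i,t})$. An $(n,N,k,m)$-PIR array code over $\mathbb{F}_q$ is an $\mathbb{F}_q$-linear map $\mathbf x\mapsto(\mathbf c_1,\dots,\mathbf c_m)$ with buckets $\mathbf c_\ell\in\mathbb{F}_q^{N_\ell}$, $N_\ell\ge1$, $\sum_\ell N_\ell=N$,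 such that for each $i\in[n]$ there is a partition of $[m]$ into $k$ sets $R_1,\dots,R_k$ such that for each $j$, $x_i$ is an $\mathbb{F}_q$-linear combination of values $f_\ell(\mathbf c_\ell)$, $\ell\in R_j$, for some linear functionals $f_\ell$ (independent of $\mathbf x$). *)

theory Defs
  imports Main
begin

text \<open>Vectors are 1-indexed. A good vector is a list v (v_i = v!(i-1)).\<close>

definition good_vector :: "nat \<Rightarrow> nat list \<Rightarrow> bool" where
  "good_vector t v \<longleftrightarrow>
     ((length v = 2*t \<and> set v \<subseteq> {1..t}) \<or> (length v = 2*t+1 \<and> set v \<subseteq> {0..t})) \<and>
     (\<forall>j\<in>{1..t}. card {i\<in>{1..length v}. v!(i-1) = j} = 2) \<and>
     (\<forall>i i' j. j \<in> {1..t} \<longrightarrow> 1 \<le> i \<longrightarrow> i < i' \<longrightarrow> i' \<le> length v \<longrightarrow>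
        v!(i-1) = j \<longrightarrow> v!(i'-1) = j \<longrightarrow> i' - i = j)"

definition jpos :: "nat list \<Rightarrow> nat \<Rightarrow> nat" where
  "jpos v j = Max {i\<in>{1..length v}. v!(i-1) = j}"

definition cn :: "nat \<Rightarrow> nat list \<Rightarrow> nat" where
  "cn t v = (if length v = 2*t then 4*t+1 else 4*t+2)"

definition modn :: "nat \<Rightarrow> int \<Rightarrow> nat" where
  "modn n k = nat ((k - 1) mod int n) + 1"

text \<open>Construction C: entry r (1 \<le> r \<le> t+1) of bucket c_l;
  r = 1 gives x_l, r = j+1 gives y_{l,j}.\<close>
definition constrC :: "nat \<Rightarrow> nat list \<Rightarrow> (nat \<Rightarrow> 'a::field) \<Rightarrow> nat \<Rightarrow> nat \<Rightarrow> 'a" where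
  "constrC t v x l r =
     (if r = 1 then x l
      else (let j = r - 1; n = cn t v; a = int l - int t - int (jpos v j)
            in x (modn n a) + x (modn n (a + int j))))"

text \<open>(n,N,k,m)-PIR array code: enc x l r is entry r (1 \<le> r \<le> Nb l) of bucket l
  (1 \<le> l \<le> m) of the codeword of x = (x_1,...,x_n). enc must be an F-linear
  map of (x_1,...,x_n); linear functionals f_l on F^{Nb l} are
  c \<mapsto> \<Sum>r. phi l r * c_r.\<close>
definition is_PIR_array_code ::
  "nat \<Rightarrow> nat \<Rightarrow> nat \<Rightarrow> nat \<Rightarrow> (nat \<Rightarrow> nat) \<Rightarrow> ((nat \<Rightarrow> 'a::field) \<Rightarrow> nat \<Rightarrow> nat \<Rightarrow> 'a) \<Rightarrow> bool" where
  "is_PIR_array_code n N k m Nb enc \<longleftrightarrow>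
     (\<forall>x y. (\<forall>s\<in>{1..n}. x s = y s) \<longrightarrow>
        (\<forall>l\<in>{1..m}. \<forall>r\<in>{1..Nb l}. enc x l r = enc y l r)) \<and>
     (\<forall>x y a b. \<forall>l\<in>{1..m}. \<forall>r\<in>{1..Nb l}.
        enc (\<lambda>s. a * x s + b * y s) l r = a * enc x l r + b * enc y l r) \<and>
     (\<forall>l\<in>{1..m}. Nb l \<ge> 1) \<and>
     (\<Sum>l=1..m. Nb l) = N \<and>
     (\<forall>i\<in>{1..n}. \<exists>R :: nat \<Rightarrow> nat set.
        (\<forall>j\<in>{1..k}. R j \<noteq> {}) \<and>
        (\<Union>j\<in>{1..k}. R j) = {1..m} \<and>
        (\<forall>j1\<in>{1..k}. \<forall>j2\<in>{1..k}. j1 \<noteq> j2 \<longrightarrow> R j1 \<inter> R j2 = {}) \<and>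
        (\<forall>j\<in>{1..k}. \<exists>(phi :: nat \<Rightarrow> nat \<Rightarrow> 'a) (mu :: nat \<Rightarrow> 'a). \<forall>x.
            x i = (\<Sum>l\<in>R j. mu l * (\<Sum>r=1..Nb l. phi l r * enc x l r))))"

end

theory Submission
  imports Defs
begin

text \<open>To read x_i, use bucket i itself, and for each j \<in> [t] the pairs {i+j, i+t+j(v)} and
{i-j, i+t+j(v)-j}: bucket i+t+j(v) stores y = x_i + x_{i+j}, and bucket i+t+j(v)-j stores
x_{i-j} + x_i, so each pair yields x_i. All remaining buckets join the set of bucket i. The 4t+1
offsets 0, \<plusminus>j, t+j(v), t+j(v)-j are distinct integers, because j(v) and j(v)-j are
exactly the two positions of j in v; they lie in the window [-t, t+|v|] of length n, so the
buckets are distinct modulo n and the 2t+1 sets are disjoint.\<close>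

lemma modn_range: "n > 0 \<Longrightarrow> modn n a \<in> {1..n}"
  unfolding modn_def by (simp add: nat_less_iff Suc_le_eq)

lemma modn_int: "modn n (int l) = l" if "l \<in> {1..n}"
  using that unfolding modn_def by auto

lemma modn_add_modn: "n > 0 \<Longrightarrow> modn n (int (modn n a) + b) = modn n (a + b)"
proof -
  assume "n > 0"
  then have "int (modn n a) + b - 1 = b + (a - 1) mod int n"
    unfolding modn_def by simp
  then show ?thesis
    unfolding modn_def by (metis mod_add_right_eq add.commute add_diff_eq)
qed

lemma modn_eq_imp_eq:
  assumes "n > 0" "modn n a = modn n b" "\<bar>a - b\<bar> < int n"
  shows "a = b"
proof -
  have "(a - 1) mod int n = (b - 1) mod int n"
    using assms(1,2) unfolding modn_def by (simp add: eq_nat_nat_iff)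
  then have "int n dvd a - b"
    by (metis mod_eq_dvd_iff diff_diff_cancel diff_diff_eq2)
  then show ?thesis
    using assms(3) by (metis dvd_imp_le_int abs_dvd_iff abs_of_nat eq_iff_diff_eq_0 linorder_not_le)
qed

lemma sum_select:
  fixes r0 N :: nat
  assumes "r0 \<in> {1..N}"
  shows "(\<Sum>r=1..N. (if r = r0 then 1 else 0) * f r) = (f r0 :: 'a::field)"
proof -
  have "(\<Sum>r=1..N. (if r = r0 then 1 else 0) * f r) = (\<Sum>r=1..N. if r = r0 then f r else 0)"
    by (rule sum.cong) auto
  also have "\<dots> = f r0"
    using assms by (subst sum.delta) auto
  finally show ?thesis .
qed

definition recoverable ::
  "((nat \<Rightarrow> 'a::field) \<Rightarrow> nat \<Rightarrow> nat \<Rightarrow> 'a) \<Rightarrow> (nat \<Rightarrow> nat) \<Rightarrow> nat set \<Rightarrow> nat \<Rightarrow> bool" where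
  "recoverable enc Nb R i \<longleftrightarrow>
     (\<exists>(phi :: nat \<Rightarrow> nat \<Rightarrow> 'a) (mu :: nat \<Rightarrow> 'a). \<forall>x.
        x i = (\<Sum>l\<in>R. mu l * (\<Sum>r=1..Nb l. phi l r * enc x l r)))"

lemma recoverable_from_entry:
  assumes "finite R" "p \<in> R" "s \<in> {1..Nb p}" "\<And>x. enc x p s = x i"
  shows "recoverable enc Nb R i"
  unfolding recoverable_def
proof (intro exI allI)
  fix x
  have "(\<Sum>l\<in>R. (if l = p then 1 else 0) * (\<Sum>r=1..Nb l. (if r = s then 1 else 0) * enc x l r))
      = (\<Sum>l\<in>R. if l = p then enc x p s else 0)"
    using sum_select[OF assms(3)] by (intro sum.cong) auto
  also have "\<dots> = x i"
    using assms by simp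
  finally show "x i = (\<Sum>l\<in>R. (if l = p then 1 else 0) *
      (\<Sum>r=1..Nb l. (if r = s then 1 else 0) * enc x l r))" ..
qed

lemma recoverable_from_pair:
  assumes "p \<noteq> q" "s \<in> {1..Nb p}" "u \<in> {1..Nb q}"
    and "\<And>x. enc x q u = x i + enc x p s"
  shows "recoverable enc Nb {p, q} i"
  unfolding recoverable_def
proof (intro exI allI)
  fix x
  define sel where "sel l = (if l = q then u else s)" for l
  have "(\<Sum>r=1..Nb l. (if r = sel l then 1 else 0) * enc x l r) = enc x l (sel l)" if "l \<in> {p, q}" for l
    using that assms(2,3) by (intro sum_select) (auto simp: sel_def)
  then show "x i = (\<Sum>l\<in>{p, q}. (if l = q then 1 else - 1) *
      (\<Sum>r=1..Nb l. (if r = sel l then 1 else 0) * enc x l r))"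
    using assms(1,4) by (simp add: sel_def)
qed

lemma cn_good_vector: "good_vector t v \<Longrightarrow> cn t v = 2 * t + length v + 1"
  unfolding good_vector_def cn_def by auto

lemma good_vector_jpos:
  assumes g: "good_vector t v" and j: "j \<in> {1..t}"
  shows "jpos v j \<le> length v" "j < jpos v j" "v ! (jpos v j - 1) = j" "v ! (jpos v j - j - 1) = j"
proof -
  define S where "S = {i\<in>{1..length v}. v ! (i - 1) = j}"
  have "card S = 2"
    using g j unfolding good_vector_def S_def by blast
  then obtain i0 p where S: "S = {i0, p}" and "i0 < p"
    by (metis card_2_iff linorder_neqE_nat insert_commute)
  have p: "jpos v j = p"
    unfolding jpos_def S_def[symmetric] S using \<open>i0 < p\<close> by simp
  have i0: "i0 \<in> S" and pS: "p \<in> S"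
    using S by auto
  have "p - i0 = j"
    using g j \<open>i0 < p\<close> i0 pS unfolding good_vector_def S_def
    by (simp only: mem_Collect_eq atLeastAtMost_iff)
  then have "i0 = p - j" "j < p"
    using \<open>i0 < p\<close> i0 unfolding S_def by auto
  then show "jpos v j \<le> length v" "j < jpos v j" "v ! (jpos v j - 1) = j" "v ! (jpos v j - j - 1) = j"
    using i0 pS unfolding p S_def by auto
qed

text \<open>Offsets, relative to i, of the buckets used to read x_i; labels k and 2t+k (1 \<le> k \<le> 2t)
form the k-th pair, and label 0 is bucket i itself.\<close>

definition recovery_offset :: "nat \<Rightarrow> nat list \<Rightarrow> nat \<Rightarrow> int" where
  "recovery_offset t v k =
     (if k \<le> t then int k
      else if k \<le> 2 * t then - int (k - t)
      else if k \<le> 3 * t then int t + int (jpos v (k - 2 * t))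
      else int t + int (jpos v (k - 3 * t)) - int (k - 3 * t))"

definition offset_label :: "nat \<Rightarrow> nat list \<Rightarrow> int \<Rightarrow> nat" where
  "offset_label t v d =
     (if d < 0 then t + nat (- d)
      else if d \<le> int t then nat d
      else let p = nat d - t; j = v ! (p - 1) in if p = jpos v j then 2 * t + j else 3 * t + j)"

lemma offset_label_beyond:
  assumes "p \<ge> 1"
  shows "offset_label t v (int t + int p) =
    (let j = v ! (p - 1) in if p = jpos v j then 2 * t + j else 3 * t + j)"
  using assms unfolding offset_label_def by (simp add: nat_int_add)

lemma recovery_label_cases:
  fixes k t :: nat
  assumes "k \<le> 4 * t"
  obtains "k \<le> 2 * t" | j where "j \<in> {1..t}" "k = 2 * t + j" | j where "j \<in> {1..t}" "k = 3 * t + j"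
proof -
  consider "k \<le> 2 * t" | "2 * t < k" "k \<le> 3 * t" | "3 * t < k"
    by linarith
  then show ?thesis
  proof cases
    case 2
    then show ?thesis
      using that(2)[of "k - 2 * t"] by auto
  next
    case 3
    then show ?thesis
      using that(3)[of "k - 3 * t"] assms by auto
  qed (use that(1) in blast)
qed

lemma offset_label_recovery_offset:
  assumes g: "good_vector t v" and k: "k \<le> 4 * t"
  shows "offset_label t v (recovery_offset t v k) = k"
  using k
proof (cases rule: recovery_label_cases)
  case (2 j)
  have "recovery_offset t v k = int t + int (jpos v j)"
    using 2 unfolding recovery_offset_def by simp
  then show ?thesis
    using good_vector_jpos[OF g 2(1)] 2 offset_label_beyond[of "jpos v j" t v] by simp
next
  case (3 j)
  have "recovery_offset t v k = int t + int (jpos v j - j)"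
    using 3 good_vector_jpos(2)[OF g 3(1)] unfolding recovery_offset_def by simp
  then show ?thesis
    using good_vector_jpos[OF g 3(1)] 3 offset_label_beyond[of "jpos v j - j" t v] by auto
qed (auto simp: recovery_offset_def offset_label_def)

lemma recovery_offset_bounds:
  assumes g: "good_vector t v" and k: "k \<le> 4 * t"
  shows "- int t \<le> recovery_offset t v k \<and> recovery_offset t v k \<le> int t + int (length v)"
  using k
proof (cases rule: recovery_label_cases)
  case (2 j)
  then show ?thesis
    using good_vector_jpos[OF g 2(1)] unfolding recovery_offset_def by simp
next
  case (3 j)
  then show ?thesis
    using good_vector_jpos[OF g 3(1)] unfolding recovery_offset_def by simp
qed (auto simp: recovery_offset_def)

definition recovery_bucket :: "nat \<Rightarrow> nat list \<Rightarrow> nat \<Rightarrow> nat \<Rightarrow> nat" where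
  "recovery_bucket t v i k = modn (cn t v) (int i + recovery_offset t v k)"

lemma recovery_bucket_range: "recovery_bucket t v i k \<in> {1..cn t v}"
  unfolding recovery_bucket_def cn_def by (rule modn_range) simp

lemma recovery_bucket_0: "i \<in> {1..cn t v} \<Longrightarrow> recovery_bucket t v i 0 = i"
  unfolding recovery_bucket_def recovery_offset_def by (simp add: modn_int)

lemma inj_on_recovery_bucket:
  assumes g: "good_vector t v"
  shows "inj_on (recovery_bucket t v i) {0..4 * t}"
proof (rule inj_onI)
  fix a b assume a: "a \<in> {0..4 * t}" and b: "b \<in> {0..4 * t}"
    and eq: "recovery_bucket t v i a = recovery_bucket t v i b"
  have "\<bar>recovery_offset t v a - recovery_offset t v b\<bar> < int (cn t v)"
    using recovery_offset_bounds[OF g, of a] recovery_offset_bounds[OF g, of b] a b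
    unfolding cn_good_vector[OF g] by auto
  then have "recovery_offset t v a = recovery_offset t v b"
    using modn_eq_imp_eq[of "cn t v"] eq unfolding recovery_bucket_def cn_good_vector[OF g] by fastforce
  then show "a = b"
    using offset_label_recovery_offset[OF g] a b by (metis atLeastAtMost_iff)
qed

lemma constrC_first: "constrC t v x l 1 = x l"
  unfolding constrC_def by simp

lemma constrC_cong:
  assumes "\<forall>s\<in>{1..cn t v}. x s = y s" "l \<in> {1..cn t v}"
  shows "constrC t v x l r = constrC t v y l r"
proof -
  have "cn t v > 0"
    unfolding cn_def by simp
  then show ?thesis
    using assms modn_range unfolding constrC_def Let_def by auto
qed

lemma constrC_linear:
  "constrC t v (\<lambda>s. a * x s + b * y s) l r = a * constrC t v x l r + b * constrC t v y l r"
  unfolding constrC_def Let_def by (simp add: algebra_simps)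

lemma constrC_shift:
  assumes "j \<ge> 1"
  shows "constrC t v x (modn (cn t v) (c + int t + int (jpos v j))) (j + 1)
           = x (modn (cn t v) c) + x (modn (cn t v) (c + int j))"
proof -
  have n: "cn t v > 0"
    unfolding cn_def by simp
  have "modn (cn t v) (int (modn (cn t v) (c + int t + int (jpos v j))) - int t - int (jpos v j) + b)
      = modn (cn t v) (c + b)" for b
    using modn_add_modn[OF n, of "c + int t + int (jpos v j)" "b - int t - int (jpos v j)"]
    by (simp add: algebra_simps)
  from this[of 0] this[of "int j"] show ?thesis
    using assms unfolding constrC_def Let_def by simp
qed

lemma constrC_recovery_bucket:
  assumes g: "good_vector t v" and i: "i \<in> {1..cn t v}" and k: "k \<in> {1..2 * t}"
  shows "\<exists>r\<in>{1..t+1}. \<forall>x. constrC t v x (recovery_bucket t v i (2 * t + k)) r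
           = x i + constrC t v x (recovery_bucket t v i k) 1"
proof (cases "k \<le> t")
  case True
  have "constrC t v x (recovery_bucket t v i (2 * t + k)) (k + 1)
      = x i + constrC t v x (recovery_bucket t v i k) 1" for x
    unfolding constrC_first using constrC_shift[of k t v x "int i"] True k modn_int[OF i]
    by (simp add: recovery_bucket_def recovery_offset_def add.assoc)
  then show ?thesis
    using True by (intro bexI[of _ "k + 1"]) auto
next
  case False
  define j where "j = k - t"
  have j: "j \<ge> 1" "j \<le> t" "k = t + j"
    using False k unfolding j_def by auto
  have "constrC t v x (recovery_bucket t v i (2 * t + k)) (j + 1)
      = x i + constrC t v x (recovery_bucket t v i k) 1" for x
    unfolding constrC_first using constrC_shift[of j t v x "int i - int j"] j modn_int[OF i]
    by (simp add: recovery_bucket_def recovery_offset_def algebra_simps)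
  then show ?thesis
    using j by (intro bexI[of _ "j + 1"]) auto
qed

definition pair_recovery_sets :: "(nat \<Rightarrow> nat) \<Rightarrow> nat \<Rightarrow> nat \<Rightarrow> nat \<Rightarrow> nat set" where
  "pair_recovery_sets b m n j =
     (if j = 1 then {1..n} - b ` {1..2 * m} else {b (j - 1), b (m + j - 1)})"

lemma pair_recovery_sets_pair:
  assumes "j \<in> {2..m+1}"
  shows "pair_recovery_sets b m n j = {b (j - 1), b (m + j - 1)}"
    and "pair_recovery_sets b m n j \<subseteq> b ` {1..2 * m}"
  using assms unfolding pair_recovery_sets_def by (auto intro!: imageI)

lemma pair_recovery_sets_1: "pair_recovery_sets b m n 1 = {1..n} - b ` {1..2 * m}"
  unfolding pair_recovery_sets_def by simp

lemma in_pair_recovery_sets_1: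
  assumes inj: "inj_on b {0..2 * m}" and range: "b ` {0..2 * m} \<subseteq> {1..n}"
  shows "b 0 \<in> pair_recovery_sets b m n 1"
proof -
  have "b 0 \<notin> b ` {1..2 * m}"
    using inj_on_eq_iff[OF inj, of 0] by fastforce
  moreover have "b 0 \<in> {1..n}"
    using range by (simp add: image_subset_iff)
  ultimately show ?thesis
    unfolding pair_recovery_sets_1 by blast
qed

lemma UN_pair_recovery_sets:
  assumes range: "b ` {0..2 * m} \<subseteq> {1..n}"
  shows "(\<Union>j\<in>{1..m+1}. pair_recovery_sets b m n j) = {1..n}"
proof
  show "(\<Union>j\<in>{1..m+1}. pair_recovery_sets b m n j) \<subseteq> {1..n}"
  proof
    fix l assume "l \<in> (\<Union>j\<in>{1..m+1}. pair_recovery_sets b m n j)"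
    then obtain j where j: "j \<in> {1..m+1}" "l \<in> pair_recovery_sets b m n j"
      by blast
    show "l \<in> {1..n}"
    proof (cases "j = 1")
      case False
      then have "j \<in> {2..m+1}"
        using j by auto
      then have "l \<in> b ` {0..2 * m}"
        using j(2) pair_recovery_sets_pair(2)[of j m b n] by auto
      then show ?thesis
        using range by blast
    qed (use j pair_recovery_sets_1 in auto)
  qed
next
  show "{1..n} \<subseteq> (\<Union>j\<in>{1..m+1}. pair_recovery_sets b m n j)"
  proof
    fix l assume l: "l \<in> {1..n}"
    show "l \<in> (\<Union>j\<in>{1..m+1}. pair_recovery_sets b m n j)"
    proof (cases "l \<in> b ` {1..2 * m}")
      case True
      then obtain k where k: "k \<in> {1..2 * m}" "l = b k"
        by blast
      define j where "j = (if k \<le> m then Suc k else Suc (k - m))"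
      have "j \<in> {2..m+1}" "l \<in> {b (j - 1), b (m + j - 1)}"
        using k unfolding j_def by auto
      then show ?thesis
        using pair_recovery_sets_pair(1)[of j m b n] by (intro UN_I[of j]) auto
    next
      case False
      then show ?thesis
        using l pair_recovery_sets_1 by (intro UN_I[of 1]) auto
    qed
  qed
qed

lemma pair_recovery_sets_disjoint:
  assumes inj: "inj_on b {0..2 * m}"
    and j1: "j1 \<in> {1..m+1}" and j2: "j2 \<in> {1..m+1}" and ne: "j1 \<noteq> j2"
  shows "pair_recovery_sets b m n j1 \<inter> pair_recovery_sets b m n j2 = {}"
proof (cases "j1 = 1 \<or> j2 = 1")
  case True
  have "pair_recovery_sets b m n j \<inter> pair_recovery_sets b m n 1 = {}" if "j \<in> {2..m+1}" for j
    using pair_recovery_sets_pair(2)[OF that] pair_recovery_sets_1 by blast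
  from this[of j1] this[of j2] show ?thesis
    using True j1 j2 ne by (auto simp: Int_commute)
next
  case False
  then have j12: "j1 \<in> {2..m+1}" "j2 \<in> {2..m+1}"
    using j1 j2 by auto
  have "b k1 \<noteq> b k2" if "k1 \<in> {j1 - 1, m + j1 - 1}" "k2 \<in> {j2 - 1, m + j2 - 1}" for k1 k2
  proof -
    have "k1 \<noteq> k2" "k1 \<in> {0..2 * m}" "k2 \<in> {0..2 * m}"
      using that j12 ne by auto
    then show ?thesis
      using inj_on_eq_iff[OF inj] by blast
  qed
  then show ?thesis
    using pair_recovery_sets_pair(1)[OF j12(1)] pair_recovery_sets_pair(1)[OF j12(2)] by auto
qed

abbreviation recovery_sets :: "nat \<Rightarrow> nat list \<Rightarrow> nat \<Rightarrow> nat \<Rightarrow> nat set" where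
  "recovery_sets t v i \<equiv> pair_recovery_sets (recovery_bucket t v i) (2 * t) (cn t v)"

lemma recovery_sets_partition:
  assumes g: "good_vector t v" and i: "i \<in> {1..cn t v}"
  shows "i \<in> recovery_sets t v i 1"
    and "(\<Union>j\<in>{1..2*t+1}. recovery_sets t v i j) = {1..cn t v}"
    and "\<And>j1 j2. j1 \<in> {1..2*t+1} \<Longrightarrow> j2 \<in> {1..2*t+1} \<Longrightarrow> j1 \<noteq> j2 \<Longrightarrow>
           recovery_sets t v i j1 \<inter> recovery_sets t v i j2 = {}"
proof -
  have inj: "inj_on (recovery_bucket t v i) {0..2 * (2 * t)}"
    using inj_on_recovery_bucket[OF g] by simp
  have range: "recovery_bucket t v i ` {0..2 * (2 * t)} \<subseteq> {1..cn t v}"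
    using recovery_bucket_range by blast
  show "i \<in> recovery_sets t v i 1"
    using in_pair_recovery_sets_1[OF inj range] recovery_bucket_0[OF i] by simp
  show "(\<Union>j\<in>{1..2*t+1}. recovery_sets t v i j) = {1..cn t v}"
    using UN_pair_recovery_sets[OF range] .
  show "recovery_sets t v i j1 \<inter> recovery_sets t v i j2 = {}"
    if "j1 \<in> {1..2*t+1}" "j2 \<in> {1..2*t+1}" "j1 \<noteq> j2" for j1 j2
    using pair_recovery_sets_disjoint[OF inj that] .
qed

lemma recoverable_recovery_sets:
  assumes g: "good_vector t v" and i: "i \<in> {1..cn t v}" and j: "j \<in> {1..2*t+1}"
  shows "recoverable (constrC t v :: (nat \<Rightarrow> 'a::field) \<Rightarrow> _) (\<lambda>_. t + 1) (recovery_sets t v i j) i"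
proof (cases "j = 1")
  case True
  have "finite (recovery_sets t v i 1)"
    unfolding pair_recovery_sets_1 by simp
  then show ?thesis
    using True recovery_sets_partition(1)[OF g i]
    by (intro recoverable_from_entry[where s = 1]) (auto simp: constrC_def)
next
  case False
  define k where "k = j - 1"
  have k: "k \<in> {1..2 * t}"
    using False j unfolding k_def by auto
  have R: "recovery_sets t v i j = {recovery_bucket t v i k, recovery_bucket t v i (2 * t + k)}"
    using pair_recovery_sets_pair(1)[of j] False j unfolding k_def by simp
  have "recovery_bucket t v i k \<noteq> recovery_bucket t v i (2 * t + k)"
    using inj_on_eq_iff[OF inj_on_recovery_bucket[OF g], of k "2 * t + k" i] k by auto
  moreover obtain r where "r \<in> {1..t+1}"
    "\<And>x :: nat \<Rightarrow> 'a. constrC t v x (recovery_bucket t v i (2 * t + k)) r = x i + constrC t v x (recovery_bucket t v i k) 1"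
    using constrC_recovery_bucket[OF g i k] by blast
  ultimately show ?thesis
    unfolding R by (intro recoverable_from_pair[where s = 1 and u = r]) auto
qed

theorem lemma4p6:
  fixes t :: nat and v :: "nat list"
  assumes "t > 0" and "good_vector t v"
  shows "is_PIR_array_code (cn t v) ((t+1) * cn t v) (2*t+1) (cn t v) (\<lambda>_. t+1)
           (constrC t v :: (nat \<Rightarrow> 'a::{finite,field}) \<Rightarrow> nat \<Rightarrow> nat \<Rightarrow> 'a)"
  unfolding is_PIR_array_code_def
proof (intro conjI ballI allI impI)
  fix i assume i: "i \<in> {1..cn t v}"
  note partition = recovery_sets_partition[OF assms(2) i]
  show "\<exists>R. (\<forall>j\<in>{1..2*t+1}. R j \<noteq> {}) \<and> (\<Union>j\<in>{1..2*t+1}. R j) = {1..cn t v} \<and>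
      (\<forall>j1\<in>{1..2*t+1}. \<forall>j2\<in>{1..2*t+1}. j1 \<noteq> j2 \<longrightarrow> R j1 \<inter> R j2 = {}) \<and>
      (\<forall>j\<in>{1..2*t+1}. \<exists>(phi :: nat \<Rightarrow> nat \<Rightarrow> 'a) mu. \<forall>x.
         x i = (\<Sum>l\<in>R j. mu l * (\<Sum>r=1..t+1. phi l r * constrC t v x l r)))"
  proof (intro exI[of _ "recovery_sets t v i"] conjI ballI impI)
    show "recovery_sets t v i j \<noteq> {}" for j
      using partition(1) unfolding pair_recovery_sets_def by auto
    show "\<exists>(phi :: nat \<Rightarrow> nat \<Rightarrow> 'a) mu. \<forall>x. x i = (\<Sum>l\<in>recovery_sets t v i j. mu l *
        (\<Sum>r=1..t+1. phi l r * constrC t v x l r))" if "j \<in> {1..2*t+1}" for j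
      using recoverable_recovery_sets[OF assms(2) i that] unfolding recoverable_def .
  qed (use partition in auto)
qed (auto simp: constrC_cong constrC_linear)

end
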